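(* Let $R$ be a finite local Frobenius ring which is not a field, with a fixed primitive additive character $\psi$, and let $\tau$ be any multiplicative character of $R$. Then $$\sum_{a\in R^\times}|K_\tau(a)|^2=\begin{cases}|R|\,|R^\times| & \text{if }\tau\text{ is non-primitive},\\ 2|R|\,|R^\times|-|R|^2 & \text{if }\tau\text{ is primitive}.\end{cases}$$
   Context: All rings are finite and commutative with identity; $R^\times$ is the unit group; $M$ is the maximal ideal. An additive character $(R,+)\to\mathbb{C}^*$ is primitive if the only ideal on which it is identically $1$ is $(0)$; $R$ is Frobenius if such a character exists. A multiplicative character is a homomorphism $R^\times\to\mathbb{C}^*$; its conductor is $R$ if it is trivial, and otherwise the largest ideal $I\subseteq M$ such that it is identically $1$ on $1+I$; it is primitive if its conductor is $(0)$. $K_\tau(a)=\sum_{u\in R^\times}\tau(u)\psi(u+au^{-1})$. *)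

theory Defs
  imports Complex_Main
begin

text \<open>Finite commutative rings are modelled by a type of class comm_ring_1 and finite.\<close>

definition ring_ideal :: "'a::comm_ring_1 set \<Rightarrow> bool" where
  "ring_ideal I \<longleftrightarrow> 0 \<in> I \<and> (\<forall>x\<in>I. \<forall>y\<in>I. x + y \<in> I) \<and> (\<forall>r. \<forall>x\<in>I. r * x \<in> I)"

definition maximal_ideal :: "'a::comm_ring_1 set \<Rightarrow> bool" where
  "maximal_ideal I \<longleftrightarrow> ring_ideal I \<and> I \<noteq> UNIV \<and>
     (\<forall>J. ring_ideal J \<and> I \<subseteq> J \<longrightarrow> J = I \<or> J = UNIV)"

definition local_ring :: "'a::comm_ring_1 itself \<Rightarrow> bool" where
  "local_ring _ \<longleftrightarrow> (\<exists>!M::'a set. maximal_ideal M)"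

definition the_max_ideal :: "'a::comm_ring_1 set" where
  "the_max_ideal = (THE M. maximal_ideal M)"

definition units :: "'a::comm_ring_1 set" where
  "units = {u. u dvd 1}"

definition unit_inv :: "'a::comm_ring_1 \<Rightarrow> 'a" where
  "unit_inv u = (THE v. u * v = 1)"

definition is_field_ring :: "'a::comm_ring_1 itself \<Rightarrow> bool" where
  "is_field_ring _ \<longleftrightarrow> (0::'a) \<noteq> 1 \<and> (\<forall>x::'a. x \<noteq> 0 \<longrightarrow> x dvd 1)"

definition add_char :: "('a::comm_ring_1 \<Rightarrow> complex) \<Rightarrow> bool" where
  "add_char \<psi> \<longleftrightarrow> (\<forall>x. \<psi> x \<noteq> 0) \<and> (\<forall>x y. \<psi> (x + y) = \<psi> x * \<psi> y)"

definition primitive_add_char :: "('a::comm_ring_1 \<Rightarrow> complex) \<Rightarrow> bool" where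
  "primitive_add_char \<psi> \<longleftrightarrow> add_char \<psi> \<and>
     (\<forall>I. ring_ideal I \<and> (\<forall>x\<in>I. \<psi> x = 1) \<longrightarrow> I = {0})"

text \<open>A multiplicative character: a homomorphism from the unit group to the nonzero complex
  numbers; only its values on units are relevant.\<close>
definition mult_char :: "('a::comm_ring_1 \<Rightarrow> complex) \<Rightarrow> bool" where
  "mult_char \<tau> \<longleftrightarrow> (\<forall>u\<in>units. \<tau> u \<noteq> 0) \<and> (\<forall>u\<in>units. \<forall>v\<in>units. \<tau> (u * v) = \<tau> u * \<tau> v)"

definition trivial_mult_char :: "('a::comm_ring_1 \<Rightarrow> complex) \<Rightarrow> bool" where
  "trivial_mult_char \<tau> \<longleftrightarrow> (\<forall>u\<in>units. \<tau> u = 1)"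

definition conductor :: "('a::comm_ring_1 \<Rightarrow> complex) \<Rightarrow> 'a set" where
  "conductor \<tau> = (if trivial_mult_char \<tau> then UNIV
     else (GREATEST I. ring_ideal I \<and> I \<subseteq> the_max_ideal \<and> (\<forall>x\<in>I. \<tau> (1 + x) = 1)))"

definition primitive_mult_char :: "('a::comm_ring_1 \<Rightarrow> complex) \<Rightarrow> bool" where
  "primitive_mult_char \<tau> \<longleftrightarrow> conductor \<tau> = {0}"

definition kloosterman :: "('a::comm_ring_1 \<Rightarrow> complex) \<Rightarrow> ('a \<Rightarrow> complex) \<Rightarrow> 'a \<Rightarrow> complex" where
  "kloosterman \<tau> \<psi> a = (\<Sum>u\<in>units. \<tau> u * \<psi> (u + a * unit_inv u))"

end

theory Submission
  imports Defs
begin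

text \<open>
  Expanding \<open>|K(a)|\<^sup>2\<close> as a double sum over units \<open>u, v\<close> and summing over \<open>a\<close> reduces everything
  to the sums of \<open>\<psi>(a c)\<close> over units \<open>a\<close>, which equal \<open>|R| [c = 0] - |M| [c \<in> ann M]\<close> by the
  duality \<open>|I| |ann I| = |R|\<close> that a primitive \<open>\<psi>\<close> forces.  The diagonal \<open>u = v\<close> contributes
  \<open>|R| |R\<^sup>\<times>|\<close>; the pairs with \<open>v \<in> u (1 + ann M)\<close> contribute \<open>-|M| (|R| - |M| S)\<close>, where \<open>S\<close> is
  the conjugate of the sum of \<open>\<tau>(1 + s)\<close> over \<open>s \<in> ann M\<close>.  Since \<open>ann M\<close> is the unique minimal
  nonzero ideal, \<open>\<tau>\<close> is primitive iff it is nontrivial on \<open>1 + ann M\<close>, i.e. iff \<open>S = 0\<close>;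
  otherwise \<open>S = |ann M| = |R| / |M|\<close>.
\<close>

section \<open>Ideals and annihilators\<close>

lemma ring_ideal_zero: "ring_ideal I \<Longrightarrow> 0 \<in> I"
  by (simp add: ring_ideal_def)

lemma ring_ideal_add: "ring_ideal I \<Longrightarrow> x \<in> I \<Longrightarrow> y \<in> I \<Longrightarrow> x + y \<in> I"
  by (simp add: ring_ideal_def)

lemma ring_ideal_mult_left: "ring_ideal I \<Longrightarrow> x \<in> I \<Longrightarrow> r * x \<in> I"
  by (simp add: ring_ideal_def)

lemma ring_ideal_uminus: "ring_ideal I \<Longrightarrow> x \<in> I \<Longrightarrow> - x \<in> I"
  using ring_ideal_mult_left[of I x "- 1"] by simp

lemma ring_ideal_diff: "ring_ideal I \<Longrightarrow> x \<in> I \<Longrightarrow> y \<in> I \<Longrightarrow> x - y \<in> I"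
  using ring_ideal_add[of I x "- y"] ring_ideal_uminus[of I y] by simp

lemma ring_ideal_UNIV: "ring_ideal UNIV"
  by (simp add: ring_ideal_def)

lemma ring_ideal_sum:
  assumes "ring_ideal I" "ring_ideal J"
  shows "ring_ideal {x + y | x y. x \<in> I \<and> y \<in> J}"
  unfolding ring_ideal_def
proof (intro conjI ballI allI)
  show "0 \<in> {x + y | x y. x \<in> I \<and> y \<in> J}"
    using assms by (force intro: ring_ideal_zero)
next
  fix a b assume "a \<in> {x + y | x y. x \<in> I \<and> y \<in> J}" "b \<in> {x + y | x y. x \<in> I \<and> y \<in> J}"
  then obtain x y x' y' where "x \<in> I" "y \<in> J" "x' \<in> I" "y' \<in> J" "a = x + y" "b = x' + y'"
    by auto
  then show "a + b \<in> {x + y | x y. x \<in> I \<and> y \<in> J}"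
    using ring_ideal_add[OF assms(1), of x x'] ring_ideal_add[OF assms(2), of y y']
    by (intro CollectI exI[of _ "x + x'"] exI[of _ "y + y'"] conjI) (simp_all add: algebra_simps)
next
  fix r a assume "a \<in> {x + y | x y. x \<in> I \<and> y \<in> J}"
  then obtain x y where "x \<in> I" "y \<in> J" "a = x + y"
    by auto
  then show "r * a \<in> {x + y | x y. x \<in> I \<and> y \<in> J}"
    using ring_ideal_mult_left[OF assms(1), of x r] ring_ideal_mult_left[OF assms(2), of y r]
    by (intro CollectI exI[of _ "r * x"] exI[of _ "r * y"] conjI) (simp_all add: algebra_simps)
qed

definition annihilator :: "'a::comm_ring_1 set \<Rightarrow> 'a set" where
  "annihilator I = {s. \<forall>m\<in>I. m * s = 0}"

lemma ring_ideal_annihilator: "ring_ideal (annihilator I)"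
  unfolding ring_ideal_def annihilator_def by (auto simp: distrib_left mult.left_commute)

lemma annihilator_UNIV: "annihilator UNIV = {0}"
  unfolding annihilator_def by auto (metis mult_1_left)

lemma annihilator_antimono: "I \<subseteq> J \<Longrightarrow> annihilator J \<subseteq> annihilator I"
  unfolding annihilator_def by auto

lemma subset_annihilator_annihilator: "I \<subseteq> annihilator (annihilator I)"
  unfolding annihilator_def by (auto simp: mult.commute)

lemma units_iff_right_inverse: "u \<in> units \<longleftrightarrow> (\<exists>v. u * v = 1)"
  unfolding units_def dvd_def mem_Collect_eq by (rule iffI; elim exE; rule exI; erule sym)

lemma one_in_units: "1 \<in> units"
  by (simp add: units_def)

lemma units_mult_closed: "u \<in> units \<Longrightarrow> v \<in> units \<Longrightarrow> u * v \<in> units"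
  unfolding units_def using mult_dvd_mono[of u 1 v 1] by simp

lemma mult_unit_inv_right:
  assumes "u \<in> units"
  shows "u * unit_inv u = 1"
proof -
  obtain v where v: "u * v = 1"
    using assms units_iff_right_inverse by blast
  have "w = v" if "u * w = 1" for w
  proof -
    have "w = (v * u) * w"
      using v by (simp add: mult.commute)
    also have "\<dots> = v"
      using that by (simp add: mult.assoc)
    finally show ?thesis .
  qed
  with v have "\<exists>!v. u * v = 1"
    by blast
  then show ?thesis
    unfolding unit_inv_def by (rule theI')
qed

lemma mult_unit_inv_left: "u \<in> units \<Longrightarrow> unit_inv u * u = 1"
  using mult_unit_inv_right by (metis mult.commute)

lemma unit_inv_in_units: "u \<in> units \<Longrightarrow> unit_inv u \<in> units"
  using mult_unit_inv_left units_iff_right_inverse by blast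

lemma unit_inv_eq_iff:
  assumes "u \<in> units" "v \<in> units"
  shows "unit_inv u = unit_inv v \<longleftrightarrow> u = v"
proof
  assume eq: "unit_inv u = unit_inv v"
  have "u = u * (v * unit_inv v)"
    using mult_unit_inv_right[OF assms(2)] by simp
  also have "\<dots> = v * (u * unit_inv u)"
    using eq by (simp add: ac_simps)
  also have "\<dots> = v"
    using mult_unit_inv_right[OF assms(1)] by simp
  finally show "u = v" .
qed simp

lemma unit_inv_diff:
  assumes "u \<in> units" "v \<in> units"
  shows "unit_inv u - unit_inv v = (unit_inv u * unit_inv v) * (v - u)"
proof -
  have "(unit_inv u * unit_inv v) * (v - u) = unit_inv u * (unit_inv v * v) - unit_inv v * (unit_inv u * u)"
    by (simp add: algebra_simps)
  then show ?thesis
    using mult_unit_inv_left[OF assms(1)] mult_unit_inv_left[OF assms(2)] by simp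
qed

lemma unit_inv_diff_in_ideal_iff:
  assumes "ring_ideal I" "u \<in> units" "v \<in> units"
  shows "unit_inv u - unit_inv v \<in> I \<longleftrightarrow> v - u \<in> I"
proof -
  have "(u * v) * (unit_inv u - unit_inv v) = v * (u * unit_inv u) - u * (v * unit_inv v)"
    by (simp add: algebra_simps)
  then have "v - u = (u * v) * (unit_inv u - unit_inv v)"
    using mult_unit_inv_right[OF assms(2)] mult_unit_inv_right[OF assms(3)] by simp
  then show ?thesis
    using unit_inv_diff[OF assms(2,3)] ring_ideal_mult_left[OF assms(1)] by metis
qed

section \<open>Characters\<close>

lemma cnj_mult_self_root_of_unity:
  fixes z :: complex
  assumes "z ^ n = 1" "n > 0"
  shows "cnj z * z = 1"
proof -
  have "norm z = 1"
    using power_eq_1_iff[OF assms(1)] assms(2) by auto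
  then show ?thesis
    using complex_norm_square[of z] by (simp add: mult.commute)
qed

lemma sum_additive_character:
  fixes \<chi> :: "'a::comm_ring_1 \<Rightarrow> 'b::field"
  assumes "ring_ideal I" "finite I"
    and hom: "\<And>x y. x \<in> I \<Longrightarrow> y \<in> I \<Longrightarrow> \<chi> (x + y) = \<chi> x * \<chi> y"
  shows "(\<Sum>x\<in>I. \<chi> x) = (if \<forall>x\<in>I. \<chi> x = 1 then of_nat (card I) else 0)"
proof (cases "\<forall>x\<in>I. \<chi> x = 1")
  case False
  then obtain b where b: "b \<in> I" "\<chi> b \<noteq> 1"
    by blast
  have "bij_betw (\<lambda>x. x + b) I I"
    by (rule bij_betw_byWitness[where f' = "\<lambda>x. x - b"])
      (auto intro: ring_ideal_add ring_ideal_diff assms b)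
  then have "(\<Sum>x\<in>I. \<chi> x) = (\<Sum>x\<in>I. \<chi> (x + b))"
    by (rule sum.reindex_bij_betw[symmetric])
  also have "\<dots> = \<chi> b * (\<Sum>x\<in>I. \<chi> x)"
    by (simp add: hom b sum_distrib_left mult.commute)
  finally have "(1 - \<chi> b) * (\<Sum>x\<in>I. \<chi> x) = 0"
    by (simp add: algebra_simps)
  then have "(\<Sum>x\<in>I. \<chi> x) = 0"
    using b by simp
  with False show ?thesis
    by auto
qed simp

lemma add_char_zero: "add_char \<psi> \<Longrightarrow> \<psi> 0 = 1"
  unfolding add_char_def by (metis add_0 mult_cancel_left2)

lemma add_char_add: "add_char \<psi> \<Longrightarrow> \<psi> (x + y) = \<psi> x * \<psi> y"
  by (simp add: add_char_def)

lemma add_char_power_card: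
  fixes \<psi> :: "'a::{comm_ring_1,finite} \<Rightarrow> complex"
  assumes "add_char \<psi>"
  shows "\<psi> x ^ card (UNIV :: 'a set) = 1"
proof -
  have "bij_betw (\<lambda>a. a + x) UNIV UNIV"
    by (rule bij_betw_byWitness[where f' = "\<lambda>a. a - x"]) auto
  then have "(\<Prod>a\<in>UNIV. \<psi> a) = (\<Prod>a\<in>UNIV. \<psi> (a + x))"
    by (rule prod.reindex_bij_betw[symmetric])
  also have "\<dots> = \<psi> x ^ card (UNIV :: 'a set) * (\<Prod>a\<in>UNIV. \<psi> a)"
    using assms by (simp add: add_char_add prod.distrib mult.commute)
  finally show ?thesis
    using assms by (simp add: add_char_def)
qed

lemma add_char_cnj:
  fixes \<psi> :: "'a::{comm_ring_1,finite} \<Rightarrow> complex"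
  assumes "add_char \<psi>"
  shows "cnj (\<psi> x) = \<psi> (- x)"
proof -
  have "cnj (\<psi> x) * \<psi> x = 1"
    by (rule cnj_mult_self_root_of_unity[OF add_char_power_card[OF assms]])
      (simp add: finite_UNIV_card_ge_0)
  moreover have "\<psi> (- x) * \<psi> x = 1"
    using assms by (simp flip: add_char_add add: add_char_zero)
  moreover have "\<psi> x \<noteq> 0"
    using assms by (simp add: add_char_def)
  ultimately show ?thesis
    by (metis mult_right_cancel)
qed

lemma sum_add_char_ideal:
  fixes \<psi> :: "'a::{comm_ring_1,finite} \<Rightarrow> complex"
  assumes "add_char \<psi>" "ring_ideal (I :: 'a set)"
  shows "(\<Sum>a\<in>I. \<psi> (a * c)) = (if \<forall>a\<in>I. \<psi> (a * c) = 1 then of_nat (card I) else 0)"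
  using assms by (intro sum_additive_character) (simp_all add: distrib_right add_char_add)

lemma primitive_add_char_trivial_on_ideal_iff:
  fixes \<psi> :: "'a::{comm_ring_1,finite} \<Rightarrow> complex"
  assumes "primitive_add_char \<psi>" "ring_ideal I"
  shows "(\<forall>a\<in>I. \<psi> (a * c) = 1) \<longleftrightarrow> c \<in> annihilator I"
proof
  assume trivial: "\<forall>a\<in>I. \<psi> (a * c) = 1"
  have "ring_ideal ((\<lambda>a. a * c) ` I)"
    unfolding ring_ideal_def
  proof (intro conjI ballI allI)
    show "0 \<in> (\<lambda>a. a * c) ` I"
      using ring_ideal_zero[OF assms(2)] by force
  next
    fix x y assume "x \<in> (\<lambda>a. a * c) ` I" "y \<in> (\<lambda>a. a * c) ` I"
    then obtain a b where "a \<in> I" "b \<in> I" "x = a * c" "y = b * c"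
      by auto
    then show "x + y \<in> (\<lambda>a. a * c) ` I"
      using ring_ideal_add[OF assms(2), of a b] by (metis distrib_right image_eqI)
  next
    fix r x assume "x \<in> (\<lambda>a. a * c) ` I"
    then obtain a where "a \<in> I" "x = a * c"
      by auto
    then show "r * x \<in> (\<lambda>a. a * c) ` I"
      using ring_ideal_mult_left[OF assms(2), of a r] by (metis mult.assoc image_eqI)
  qed
  with assms(1) trivial have "(\<lambda>a. a * c) ` I = {0}"
    unfolding primitive_add_char_def by blast
  then show "c \<in> annihilator I"
    unfolding annihilator_def by auto
next
  assume "c \<in> annihilator I"
  moreover have "\<psi> 0 = 1"
    using assms(1) by (simp add: primitive_add_char_def add_char_zero)
  ultimately show "\<forall>a\<in>I. \<psi> (a * c) = 1"
    by (simp add: annihilator_def)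
qed

text \<open>Double counting: sum \<open>\<psi> (a * c)\<close> over \<open>a \<in> I\<close> and all \<open>c\<close>, first over \<open>a\<close>, then over \<open>c\<close>.\<close>

lemma card_mult_card_annihilator:
  fixes \<psi> :: "'a::{comm_ring_1,finite} \<Rightarrow> complex"
  assumes "primitive_add_char \<psi>" "ring_ideal (I :: 'a set)"
  shows "card I * card (annihilator I) = card (UNIV :: 'a set)"
proof -
  have \<psi>: "add_char \<psi>"
    using assms(1) by (simp add: primitive_add_char_def)
  have "(of_nat (card I * card (annihilator I)) :: complex) = (\<Sum>c\<in>UNIV. \<Sum>a\<in>I. \<psi> (a * c))"
    using sum_add_char_ideal[OF \<psi> assms(2)] primitive_add_char_trivial_on_ideal_iff[OF assms]
    by (simp add: sum.If_cases)
  also have "\<dots> = (\<Sum>a\<in>I. \<Sum>c\<in>UNIV. \<psi> (c * a))"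
    by (subst sum.swap) (simp add: mult.commute)
  also have "\<dots> = of_nat (card (UNIV :: 'a set))"
    using sum_add_char_ideal[OF \<psi> ring_ideal_UNIV]
      primitive_add_char_trivial_on_ideal_iff[OF assms(1) ring_ideal_UNIV]
      ring_ideal_zero[OF assms(2)]
    by (simp add: annihilator_UNIV sum.If_cases Int_absorb1)
  finally show ?thesis
    by (simp only: of_nat_eq_iff)
qed

lemma annihilator_annihilator:
  fixes \<psi> :: "'a::{comm_ring_1,finite} \<Rightarrow> complex"
  assumes "primitive_add_char \<psi>" "ring_ideal (I :: 'a set)"
  shows "annihilator (annihilator I) = I"
proof -
  have "card (annihilator I) * card (annihilator (annihilator I)) = card I * card (annihilator I)"
    using card_mult_card_annihilator[OF assms(1)] assms(2) ring_ideal_annihilator by metis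
  moreover have "card (annihilator I) > 0"
    using ring_ideal_zero[OF ring_ideal_annihilator] by (metis card_gt_0_iff empty_iff finite)
  ultimately have "card (annihilator (annihilator I)) = card I"
    by (metis mult.commute mult_left_cancel not_gr0)
  then show ?thesis
    using subset_annihilator_annihilator by (metis card_subset_eq finite)
qed

lemma mult_char_one:
  assumes "mult_char \<tau>"
  shows "\<tau> 1 = 1"
proof -
  have "\<tau> 1 = \<tau> 1 * \<tau> 1" "\<tau> 1 \<noteq> 0"
    using assms one_in_units unfolding mult_char_def by (metis mult_1, blast)
  then show ?thesis
    by simp
qed

lemma mult_char_cnj_mult_self:
  assumes "mult_char (\<tau> :: 'a::{comm_ring_1,finite} \<Rightarrow> complex)" "v \<in> units"
  shows "cnj (\<tau> v) * \<tau> v = 1"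
proof -
  have "bij_betw (\<lambda>a. a * v) units units"
    by (rule bij_betw_byWitness[where f' = "\<lambda>a. a * unit_inv v"])
      (auto simp: mult.assoc mult_unit_inv_right mult_unit_inv_left assms(2)
        intro: units_mult_closed unit_inv_in_units assms(2))
  then have "(\<Prod>a\<in>units. \<tau> a) = (\<Prod>a\<in>units. \<tau> (a * v))"
    by (rule prod.reindex_bij_betw[symmetric])
  also have "\<dots> = \<tau> v ^ card (units :: 'a set) * (\<Prod>a\<in>units. \<tau> a)"
    using assms by (simp add: mult_char_def prod.distrib mult.commute)
  finally have "\<tau> v ^ card (units :: 'a set) = 1"
    using assms(1) by (simp add: mult_char_def)
  moreover have "card (units :: 'a set) > 0"
    using one_in_units by (metis card_gt_0_iff empty_iff finite)
  ultimately show ?thesis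
    by (rule cnj_mult_self_root_of_unity)
qed

section \<open>Finite local rings\<close>

lemma ex_maximal_ideal_superset:
  fixes I :: "'a::{comm_ring_1,finite} set"
  assumes "ring_ideal I" "I \<noteq> UNIV"
  shows "\<exists>J. maximal_ideal J \<and> I \<subseteq> J"
proof -
  let ?S = "{J. ring_ideal J \<and> J \<noteq> UNIV \<and> I \<subseteq> J}"
  obtain m where m: "m \<in> ?S" "\<And>J. J \<in> ?S \<Longrightarrow> m \<subseteq> J \<Longrightarrow> m = J"
    using finite_has_maximal[of ?S] assms by auto
  have "maximal_ideal m"
    unfolding maximal_ideal_def
  proof (intro conjI allI impI)
    fix J assume "ring_ideal J \<and> m \<subseteq> J"
    with m show "J = m \<or> J = UNIV"
      by (cases "J = UNIV") auto
  qed (use m(1) in simp_all)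
  with m(1) show ?thesis
    by auto
qed

lemma maximal_ideal_the_max_ideal:
  assumes "local_ring TYPE('a::comm_ring_1)"
  shows "maximal_ideal (the_max_ideal :: 'a set)"
  using assms unfolding local_ring_def the_max_ideal_def by (rule theI')

lemma the_max_ideal_eq_nonunits:
  assumes "local_ring TYPE('a::{comm_ring_1,finite})"
  shows "(the_max_ideal :: 'a set) = - units"
proof
  have max: "maximal_ideal (the_max_ideal :: 'a set)"
    by (rule maximal_ideal_the_max_ideal[OF assms])
  show "(the_max_ideal :: 'a set) \<subseteq> - units"
  proof
    fix x :: 'a assume x: "x \<in> the_max_ideal"
    show "x \<in> - units"
    proof
      assume "x \<in> units"
      then obtain v where v: "x * v = 1"
        using units_iff_right_inverse by blast
      have "r \<in> the_max_ideal" for r :: 'a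
      proof -
        have "(r * v) * x \<in> the_max_ideal"
          using max x ring_ideal_mult_left unfolding maximal_ideal_def by blast
        then show ?thesis
          using v by (simp add: mult.assoc mult.commute[of v x])
      qed
      with max show False
        unfolding maximal_ideal_def by blast
    qed
  qed
  show "- units \<subseteq> (the_max_ideal :: 'a set)"
  proof
    fix x :: 'a assume x: "x \<in> - units"
    let ?I = "range (\<lambda>r. x * r)"
    have "ring_ideal ?I"
      unfolding ring_ideal_def
      by (auto simp: distrib_left[symmetric]; metis mult_zero_right mult.left_commute rangeI)
    moreover have "?I \<noteq> UNIV"
    proof
      assume "?I = UNIV"
      then obtain r where "1 = x * r"
        by (metis UNIV_I image_iff)
      with x show False
        using units_iff_right_inverse by auto
    qed
    ultimately obtain J where J: "maximal_ideal J" "?I \<subseteq> J"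
      using ex_maximal_ideal_superset by blast
    have "J = the_max_ideal"
      using assms J(1) max unfolding local_ring_def by blast
    moreover have "x \<in> ?I"
      by (metis mult_1_right rangeI)
    ultimately show "x \<in> the_max_ideal"
      using J(2) by blast
  qed
qed

locale frobenius_local_ring =
  fixes \<psi> :: "'a::{comm_ring_1,finite} \<Rightarrow> complex"
  assumes local_ring: "local_ring TYPE('a)"
    and not_field: "\<not> is_field_ring TYPE('a)"
    and primitive: "primitive_add_char \<psi>"
begin

abbreviation M :: "'a set" where
  "M \<equiv> the_max_ideal"

abbreviation socle :: "'a set" where
  "socle \<equiv> annihilator M"

lemma add_char: "add_char \<psi>"
  using primitive by (simp add: primitive_add_char_def)

lemma ring_ideal_M: "ring_ideal M"
  using maximal_ideal_the_max_ideal[OF local_ring] by (simp add: maximal_ideal_def)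

lemma M_neq_UNIV: "M \<noteq> UNIV"
  using maximal_ideal_the_max_ideal[OF local_ring] by (simp add: maximal_ideal_def)

lemma mem_M_iff: "x \<in> M \<longleftrightarrow> x \<notin> units"
  using the_max_ideal_eq_nonunits[OF local_ring] by auto

lemma card_M: "card M = card (UNIV :: 'a set) - card (units :: 'a set)"
proof -
  have "M = UNIV - units"
    using mem_M_iff by auto
  then show ?thesis
    using card_Diff_subset[of "units :: 'a set" UNIV] by simp
qed

lemma zero_neq_one: "(0 :: 'a) \<noteq> 1"
proof
  assume "(0 :: 'a) = 1"
  then have "x = 0" for x :: 'a
    by (metis mult_1_right mult_zero_right)
  then have "M = UNIV"
    using ring_ideal_zero[OF ring_ideal_M] by (metis UNIV_eq_I)
  with M_neq_UNIV show False
    by simp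
qed

lemma add_M_in_units: "u \<in> units \<Longrightarrow> m \<in> M \<Longrightarrow> u + m \<in> units"
  using ring_ideal_diff[OF ring_ideal_M, of "u + m" m] mem_M_iff by auto

lemma socle_subset_M: "socle \<subseteq> M"
proof
  fix s assume s: "s \<in> socle"
  show "s \<in> M"
  proof (rule ccontr)
    assume "s \<notin> M"
    then obtain w where w: "s * w = 1"
      using mem_M_iff units_iff_right_inverse by blast
    have "m = 0" if "m \<in> M" for m
    proof -
      have "m * s = 0"
        using s that by (simp add: annihilator_def)
      then have "m * s * w = 0"
        by simp
      with w show "m = 0"
        by (simp add: mult.assoc)
    qed
    then have "is_field_ring TYPE('a)"
      unfolding is_field_ring_def using zero_neq_one mem_M_iff units_def by auto
    with not_field show False
      by simp
  qed
qed

lemma one_plus_socle_in_units: "s \<in> socle \<Longrightarrow> 1 + s \<in> units"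
  using add_M_in_units[OF one_in_units] socle_subset_M by blast

lemma mult_socle_socle: "s \<in> socle \<Longrightarrow> s' \<in> socle \<Longrightarrow> s * s' = 0"
  using socle_subset_M by (auto simp: annihilator_def)

lemma card_M_mult_card_socle: "card M * card socle = card (UNIV :: 'a set)"
  by (rule card_mult_card_annihilator[OF primitive ring_ideal_M])

lemma socle_neq_zero: "socle \<noteq> {0}"
proof
  assume "socle = {0}"
  then have "annihilator socle = UNIV"
    by (simp add: annihilator_def)
  with annihilator_annihilator[OF primitive ring_ideal_M] M_neq_UNIV show False
    by simp
qed

text \<open>The socle is the unique minimal nonzero ideal: dualise \<open>annihilator I \<subseteq> M\<close>.\<close>

lemma socle_subset_ideal:
  assumes "ring_ideal I" "I \<noteq> {0}"
  shows "socle \<subseteq> I"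
proof -
  have "annihilator I \<subseteq> M"
  proof
    fix x assume x: "x \<in> annihilator I"
    show "x \<in> M"
    proof (rule ccontr)
      assume "x \<notin> M"
      then obtain w where "x * w = 1"
        using mem_M_iff units_iff_right_inverse by blast
      then have "1 \<in> annihilator I"
        using ring_ideal_mult_left[OF ring_ideal_annihilator x, of w] by (simp add: mult.commute)
      then have "I \<subseteq> {0}"
        by (auto simp: annihilator_def)
      with assms show False
        using ring_ideal_zero by blast
    qed
  qed
  then have "socle \<subseteq> annihilator (annihilator I)"
    by (rule annihilator_antimono)
  then show ?thesis
    using annihilator_annihilator[OF primitive assms(1)] by simp
qed

lemma sum_units_add_char:
  "(\<Sum>a\<in>units. \<psi> (a * c)) =
     (if c = 0 then of_nat (card (UNIV :: 'a set)) else 0) - (if c \<in> socle then of_nat (card M) else 0)"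
proof -
  have "units = UNIV - M"
    using mem_M_iff by auto
  then have "(\<Sum>a\<in>units. \<psi> (a * c)) = (\<Sum>a\<in>UNIV. \<psi> (a * c)) - (\<Sum>a\<in>M. \<psi> (a * c))"
    using sum_diff[of UNIV M "\<lambda>a. \<psi> (a * c)"] by simp
  also have "(\<Sum>a\<in>UNIV. \<psi> (a * c)) = (if c = 0 then of_nat (card (UNIV :: 'a set)) else 0)"
    using sum_add_char_ideal[OF add_char ring_ideal_UNIV, of c]
      primitive_add_char_trivial_on_ideal_iff[OF primitive ring_ideal_UNIV, of c]
    by (simp add: annihilator_UNIV)
  also have "(\<Sum>a\<in>M. \<psi> (a * c)) = (if c \<in> socle then of_nat (card M) else 0)"
    using sum_add_char_ideal[OF add_char ring_ideal_M]
      primitive_add_char_trivial_on_ideal_iff[OF primitive ring_ideal_M] by simp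
  finally show ?thesis .
qed

end

section \<open>The conductor\<close>

definition conductor_candidate :: "('a::comm_ring_1 \<Rightarrow> complex) \<Rightarrow> 'a set \<Rightarrow> bool" where
  "conductor_candidate \<tau> I \<longleftrightarrow> ring_ideal I \<and> I \<subseteq> the_max_ideal \<and> (\<forall>x\<in>I. \<tau> (1 + x) = 1)"

lemma conductor_eq_Greatest:
  "\<not> trivial_mult_char \<tau> \<Longrightarrow> conductor \<tau> = Greatest (conductor_candidate \<tau>)"
  unfolding conductor_def conductor_candidate_def[abs_def] by simp

locale kloosterman_setting = frobenius_local_ring \<psi> for \<psi> :: "'a::{comm_ring_1,finite} \<Rightarrow> complex" +
  fixes \<tau> :: "'a \<Rightarrow> complex"
  assumes mult_char: "mult_char \<tau>"
begin

lemma mult_char_mult: "u \<in> units \<Longrightarrow> v \<in> units \<Longrightarrow> \<tau> (u * v) = \<tau> u * \<tau> v"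
  using mult_char by (simp add: mult_char_def)

lemma conductor_candidate_zero: "conductor_candidate \<tau> {0}"
  using ring_ideal_zero[OF ring_ideal_M] mult_char_one[OF mult_char]
  by (simp add: conductor_candidate_def ring_ideal_def)

text \<open>\<open>1 + x + y = (1 + x) (1 + y')\<close> with \<open>y' = (1 + x)\<^sup>-\<^sup>1 y \<in> J\<close>.\<close>

lemma conductor_candidate_sum:
  assumes "conductor_candidate \<tau> I" "conductor_candidate \<tau> J"
  shows "conductor_candidate \<tau> {x + y | x y. x \<in> I \<and> y \<in> J}"
proof -
  have I: "ring_ideal I" "I \<subseteq> M" "\<And>x. x \<in> I \<Longrightarrow> \<tau> (1 + x) = 1"
    using assms(1) by (auto simp: conductor_candidate_def)
  have J: "ring_ideal J" "J \<subseteq> M" "\<And>y. y \<in> J \<Longrightarrow> \<tau> (1 + y) = 1"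
    using assms(2) by (auto simp: conductor_candidate_def)
  have "\<tau> (1 + (x + y)) = 1" if "x \<in> I" "y \<in> J" for x y
  proof -
    have x: "1 + x \<in> units"
      using add_M_in_units[OF one_in_units] that(1) I(2) by blast
    define y' where "y' = unit_inv (1 + x) * y"
    have "y' \<in> J"
      unfolding y'_def using ring_ideal_mult_left[OF J(1) that(2)] .
    then have y': "1 + y' \<in> units"
      using add_M_in_units[OF one_in_units] J(2) by blast
    have "(1 + x) * (1 + y') = 1 + x + ((1 + x) * unit_inv (1 + x)) * y"
      by (simp add: y'_def algebra_simps)
    also have "\<dots> = 1 + (x + y)"
      using mult_unit_inv_right[OF x] by simp
    finally show ?thesis
      using mult_char_mult[OF x y'] I(3)[OF that(1)] J(3)[OF \<open>y' \<in> J\<close>] by simp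
  qed
  moreover have "{x + y | x y. x \<in> I \<and> y \<in> J} \<subseteq> M"
    using I(2) J(2) ring_ideal_add[OF ring_ideal_M] by auto
  ultimately show ?thesis
    using ring_ideal_sum[OF I(1) J(1)] by (auto simp: conductor_candidate_def)
qed

lemma conductor_candidate_greatest:
  obtains C where "conductor_candidate \<tau> C" "\<And>J. conductor_candidate \<tau> J \<Longrightarrow> J \<subseteq> C"
proof -
  obtain C where C: "conductor_candidate \<tau> C"
    and max: "\<And>J. conductor_candidate \<tau> J \<Longrightarrow> C \<subseteq> J \<Longrightarrow> C = J"
    using finite_has_maximal[of "Collect (conductor_candidate \<tau>)"] conductor_candidate_zero
    by (metis empty_iff finite mem_Collect_eq)
  have "J \<subseteq> C" if J: "conductor_candidate \<tau> J" for J
  proof -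
    have zero: "0 \<in> J" "0 \<in> C"
      using C J by (simp_all add: conductor_candidate_def ring_ideal_zero)
    have "C \<subseteq> {x + y | x y. x \<in> C \<and> y \<in> J}"
      using zero by force
    then have "C = {x + y | x y. x \<in> C \<and> y \<in> J}"
      using max conductor_candidate_sum[OF C J] by blast
    moreover have "J \<subseteq> {x + y | x y. x \<in> C \<and> y \<in> J}"
      using zero by force
    ultimately show ?thesis
      by simp
  qed
  with C show ?thesis
    by (rule that)
qed

lemma conductor_eq_greatest_candidate:
  assumes "\<not> trivial_mult_char \<tau>" "conductor_candidate \<tau> C"
    and "\<And>J. conductor_candidate \<tau> J \<Longrightarrow> J \<subseteq> C"
  shows "conductor \<tau> = C"
  unfolding conductor_eq_Greatest[OF assms(1)] using assms(2,3) by (intro Greatest_equality) auto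

lemma primitive_mult_char_iff: "primitive_mult_char \<tau> \<longleftrightarrow> (\<exists>s\<in>socle. \<tau> (1 + s) \<noteq> 1)"
proof
  assume primitive: "primitive_mult_char \<tau>"
  show "\<exists>s\<in>socle. \<tau> (1 + s) \<noteq> 1"
  proof (rule ccontr)
    assume "\<not> (\<exists>s\<in>socle. \<tau> (1 + s) \<noteq> 1)"
    then have socle: "conductor_candidate \<tau> socle"
      using ring_ideal_annihilator socle_subset_M by (auto simp: conductor_candidate_def)
    show False
    proof (cases "trivial_mult_char \<tau>")
      case True
      with primitive have "(UNIV :: 'a set) = {0}"
        by (simp add: primitive_mult_char_def conductor_def)
      with zero_neq_one show False
        by (metis UNIV_I singletonD)
    next
      case False
      obtain C where C: "conductor_candidate \<tau> C" "\<And>J. conductor_candidate \<tau> J \<Longrightarrow> J \<subseteq> C"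
        using conductor_candidate_greatest by blast
      then have "socle \<subseteq> {0}"
        using socle primitive conductor_eq_greatest_candidate[OF False]
        by (auto simp: primitive_mult_char_def)
      with socle_neq_zero ring_ideal_zero[OF ring_ideal_annihilator] show False
        by blast
    qed
  qed
next
  assume "\<exists>s\<in>socle. \<tau> (1 + s) \<noteq> 1"
  then obtain s where s: "s \<in> socle" "\<tau> (1 + s) \<noteq> 1"
    by blast
  then have "\<not> trivial_mult_char \<tau>"
    using one_plus_socle_in_units by (auto simp: trivial_mult_char_def)
  moreover have "J \<subseteq> {0}" if "conductor_candidate \<tau> J" for J
  proof (rule ccontr)
    assume "\<not> J \<subseteq> {0}"
    then have "socle \<subseteq> J"
      using that socle_subset_ideal by (auto simp: conductor_candidate_def)
    with that s show False
      by (auto simp: conductor_candidate_def)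
  qed
  ultimately have "conductor \<tau> = {0}"
    using conductor_eq_greatest_candidate conductor_candidate_zero by blast
  then show "primitive_mult_char \<tau>"
    by (simp add: primitive_mult_char_def)
qed

text \<open>On the socle \<open>s \<mapsto> \<tau> (1 + s)\<close> is additive, since \<open>s s' = 0\<close>.\<close>

lemma sum_socle_mult_char:
  "(\<Sum>s\<in>socle. \<tau> (1 + s)) = (if primitive_mult_char \<tau> then 0 else of_nat (card socle))"
proof -
  have "\<tau> (1 + (s + s')) = \<tau> (1 + s) * \<tau> (1 + s')" if "s \<in> socle" "s' \<in> socle" for s s'
  proof -
    have "(1 + s) * (1 + s') = 1 + (s + s')"
      using mult_socle_socle[OF that] by (simp add: algebra_simps)
    then show ?thesis
      using mult_char_mult one_plus_socle_in_units that by metis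
  qed
  then show ?thesis
    using sum_additive_character[OF ring_ideal_annihilator, of M "\<lambda>s. \<tau> (1 + s)"]
    by (simp add: primitive_mult_char_iff)
qed

section \<open>The second moment\<close>

definition cross_term :: "'a \<Rightarrow> 'a \<Rightarrow> complex" where
  "cross_term u v = \<tau> u * cnj (\<tau> v) * \<psi> (u - v)"

lemma cross_term_diag: "u \<in> units \<Longrightarrow> cross_term u u = 1"
  using mult_char_cnj_mult_self[OF mult_char] add_char_zero[OF add_char]
  by (simp add: cross_term_def mult.commute)

lemma kloosterman_mult_cnj:
  "kloosterman \<tau> \<psi> a * cnj (kloosterman \<tau> \<psi> a) =
     (\<Sum>u\<in>units. \<Sum>v\<in>units. cross_term u v * \<psi> (a * (unit_inv u - unit_inv v)))"
proof -
  have "\<psi> (u + a * unit_inv u) * \<psi> (- (v + a * unit_inv v)) =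
      \<psi> (u - v) * \<psi> (a * (unit_inv u - unit_inv v))" for u v
    by (simp flip: add_char_add[OF add_char]) (simp add: algebra_simps)
  then show ?thesis
    unfolding kloosterman_def cross_term_def
    by (simp add: sum_product add_char_cnj[OF add_char] ac_simps)
qed

lemma sum_units_add_char_unit_inv_diff:
  assumes "u \<in> units" "v \<in> units"
  shows "(\<Sum>a\<in>units. \<psi> (a * (unit_inv u - unit_inv v))) =
     (if u = v then of_nat (card (UNIV :: 'a set)) else 0) - (if v - u \<in> socle then of_nat (card M) else 0)"
  using unit_inv_eq_iff[OF assms] unit_inv_diff_in_ideal_iff[OF ring_ideal_annihilator assms]
  by (simp add: sum_units_add_char)

text \<open>The units \<open>v\<close> with \<open>v - u \<in> socle\<close> are exactly \<open>v = u (1 + s)\<close>, \<open>s \<in> socle\<close>.\<close>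

lemma sum_cross_term_socle_coset:
  assumes u: "u \<in> units"
  shows "(\<Sum>v\<in>{v\<in>units. v - u \<in> socle}. cross_term u v) =
     (\<Sum>s\<in>socle. cnj (\<tau> (1 + s)) * \<psi> (u * - s))"
proof -
  have "bij_betw (\<lambda>s. u * (1 + s)) socle {v\<in>units. v - u \<in> socle}"
  proof (rule bij_betw_byWitness[where f' = "\<lambda>v. unit_inv u * (v - u)"])
    show "\<forall>s\<in>socle. unit_inv u * (u * (1 + s) - u) = s"
      using mult_unit_inv_left[OF u] by (simp add: algebra_simps flip: mult.assoc)
    show "\<forall>v\<in>{v\<in>units. v - u \<in> socle}. u * (1 + unit_inv u * (v - u)) = v"
      using mult_unit_inv_right[OF u] by (simp add: algebra_simps flip: mult.assoc)
    show "(\<lambda>s. u * (1 + s)) ` socle \<subseteq> {v\<in>units. v - u \<in> socle}"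
      using units_mult_closed[OF u one_plus_socle_in_units]
        ring_ideal_mult_left[OF ring_ideal_annihilator]
      by (auto simp: algebra_simps)
    show "(\<lambda>v. unit_inv u * (v - u)) ` {v\<in>units. v - u \<in> socle} \<subseteq> socle"
      using ring_ideal_mult_left[OF ring_ideal_annihilator] by auto
  qed
  then have "(\<Sum>v\<in>{v\<in>units. v - u \<in> socle}. cross_term u v) = (\<Sum>s\<in>socle. cross_term u (u * (1 + s)))"
    by (rule sum.reindex_bij_betw[symmetric])
  also have "\<dots> = (\<Sum>s\<in>socle. cnj (\<tau> (1 + s)) * \<psi> (u * - s))"
  proof (rule sum.cong[OF refl])
    fix s assume "s \<in> socle"
    then have "\<tau> (u * (1 + s)) = \<tau> u * \<tau> (1 + s)"
      using mult_char_mult[OF u one_plus_socle_in_units] by simp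
    moreover have "u - u * (1 + s) = u * - s"
      by (simp add: algebra_simps)
    ultimately have "cross_term u (u * (1 + s)) =
        (cnj (\<tau> u) * \<tau> u) * cnj (\<tau> (1 + s)) * \<psi> (u * - s)"
      by (simp add: cross_term_def ac_simps)
    then show "cross_term u (u * (1 + s)) = cnj (\<tau> (1 + s)) * \<psi> (u * - s)"
      using mult_char_cnj_mult_self[OF mult_char u] by simp
  qed
  finally show ?thesis .
qed

lemma sum_units_socle:
  "(\<Sum>u\<in>units. \<Sum>s\<in>socle. cnj (\<tau> (1 + s)) * \<psi> (u * - s)) =
     of_nat (card (UNIV :: 'a set)) - of_nat (card M) * cnj (\<Sum>s\<in>socle. \<tau> (1 + s))"
proof -
  have "(\<Sum>u\<in>units. \<Sum>s\<in>socle. cnj (\<tau> (1 + s)) * \<psi> (u * - s)) =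
      (\<Sum>s\<in>socle. cnj (\<tau> (1 + s)) * (\<Sum>u\<in>units. \<psi> (u * - s)))"
    by (subst sum.swap) (simp only: sum_distrib_left)
  also have "\<dots> = (\<Sum>s\<in>socle. cnj (\<tau> (1 + s)) *
      ((if s = 0 then of_nat (card (UNIV :: 'a set)) else 0) - of_nat (card M)))"
  proof (rule sum.cong[OF refl])
    fix s assume "s \<in> socle"
    then have "- s \<in> socle"
      by (rule ring_ideal_uminus[OF ring_ideal_annihilator])
    then show "cnj (\<tau> (1 + s)) * (\<Sum>u\<in>units. \<psi> (u * - s)) =
        cnj (\<tau> (1 + s)) * ((if s = 0 then of_nat (card (UNIV :: 'a set)) else 0) - of_nat (card M))"
      by (simp only: sum_units_add_char) simp
  qed
  also have "\<dots> = (\<Sum>s\<in>socle. (if s = 0 then of_nat (card (UNIV :: 'a set)) * cnj (\<tau> (1 + s)) else 0) -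
      of_nat (card M) * cnj (\<tau> (1 + s)))"
    by (rule sum.cong[OF refl]) (simp add: algebra_simps)
  also have "\<dots> = (\<Sum>s\<in>socle. if s = 0 then of_nat (card (UNIV :: 'a set)) * cnj (\<tau> (1 + s)) else 0) -
      of_nat (card M) * (\<Sum>s\<in>socle. cnj (\<tau> (1 + s)))"
    by (simp only: sum_subtractf sum_distrib_left)
  also have "\<dots> = of_nat (card (UNIV :: 'a set)) - of_nat (card M) * cnj (\<Sum>s\<in>socle. \<tau> (1 + s))"
    using ring_ideal_zero[OF ring_ideal_annihilator] mult_char_one[OF mult_char] by simp
  finally show ?thesis .
qed

lemma sum_kloosterman_mult_cnj:
  "(\<Sum>a\<in>units. kloosterman \<tau> \<psi> a * cnj (kloosterman \<tau> \<psi> a)) =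
     of_nat (card (UNIV :: 'a set)) * of_nat (card (units :: 'a set)) -
     of_nat (card M) * (of_nat (card (UNIV :: 'a set)) - of_nat (card M) * cnj (\<Sum>s\<in>socle. \<tau> (1 + s)))"
proof -
  have inner: "(\<Sum>v\<in>units. cross_term u v * (\<Sum>a\<in>units. \<psi> (a * (unit_inv u - unit_inv v)))) =
      of_nat (card (UNIV :: 'a set)) - of_nat (card M) * (\<Sum>v\<in>{v\<in>units. v - u \<in> socle}. cross_term u v)"
    if u: "u \<in> units" for u
  proof -
    have "(\<Sum>v\<in>units. cross_term u v * (\<Sum>a\<in>units. \<psi> (a * (unit_inv u - unit_inv v)))) =
        (\<Sum>v\<in>units. (if u = v then of_nat (card (UNIV :: 'a set)) * cross_term u v else 0) -
          of_nat (card M) * (if v - u \<in> socle then cross_term u v else 0))"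
    proof (rule sum.cong[OF refl])
      fix v :: 'a assume v: "v \<in> units"
      show "cross_term u v * (\<Sum>a\<in>units. \<psi> (a * (unit_inv u - unit_inv v))) =
          (if u = v then of_nat (card (UNIV :: 'a set)) * cross_term u v else 0) -
          of_nat (card M) * (if v - u \<in> socle then cross_term u v else 0)"
        by (simp only: sum_units_add_char_unit_inv_diff[OF u v]) (simp add: algebra_simps)
    qed
    also have "\<dots> = of_nat (card (UNIV :: 'a set)) -
        of_nat (card M) * (\<Sum>v\<in>{v\<in>units. v - u \<in> socle}. cross_term u v)"
      using u cross_term_diag[OF u] by (simp add: sum_subtractf sum_distrib_left sum.inter_filter)
    finally show ?thesis .
  qed
  have "(\<Sum>a\<in>units. kloosterman \<tau> \<psi> a * cnj (kloosterman \<tau> \<psi> a)) =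
      (\<Sum>u\<in>units. \<Sum>v\<in>units. cross_term u v * (\<Sum>a\<in>units. \<psi> (a * (unit_inv u - unit_inv v))))"
    unfolding kloosterman_mult_cnj sum_distrib_left
    by (subst sum.swap, rule sum.cong[OF refl], rule sum.swap)
  also have "\<dots> = (\<Sum>u\<in>units. of_nat (card (UNIV :: 'a set)) -
      of_nat (card M) * (\<Sum>s\<in>socle. cnj (\<tau> (1 + s)) * \<psi> (u * - s)))"
    using inner sum_cross_term_socle_coset by simp
  also have "\<dots> = of_nat (card (UNIV :: 'a set)) * of_nat (card (units :: 'a set)) -
      of_nat (card M) * (\<Sum>u\<in>units. \<Sum>s\<in>socle. cnj (\<tau> (1 + s)) * \<psi> (u * - s))"
    by (simp add: sum_subtractf sum_distrib_left mult.commute)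
  finally show ?thesis
    unfolding sum_units_socle .
qed

lemma sum_cmod_kloosterman_sq:
  "(\<Sum>a\<in>units. (cmod (kloosterman \<tau> \<psi> a))\<^sup>2) =
     real (card (UNIV :: 'a set)) * real (card (units :: 'a set)) -
     real (card M) * (real (card (UNIV :: 'a set)) -
       (if primitive_mult_char \<tau> then 0 else real (card M) * real (card socle)))"
proof -
  have "complex_of_real (\<Sum>a\<in>units. (cmod (kloosterman \<tau> \<psi> a))\<^sup>2) =
      (\<Sum>a\<in>units. kloosterman \<tau> \<psi> a * cnj (kloosterman \<tau> \<psi> a))"
    unfolding of_real_sum by (rule sum.cong[OF refl]) (rule complex_norm_square)
  also have "\<dots> = complex_of_real (real (card (UNIV :: 'a set)) * real (card (units :: 'a set)) -
     real (card M) * (real (card (UNIV :: 'a set)) -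
       (if primitive_mult_char \<tau> then 0 else real (card M) * real (card socle))))"
    by (simp add: sum_kloosterman_mult_cnj sum_socle_mult_char)
  finally show ?thesis
    by (simp only: of_real_eq_iff)
qed

end

theorem mainTheorem7:
  fixes \<psi> \<tau> :: "'a::{comm_ring_1,finite} \<Rightarrow> complex"
  assumes "local_ring TYPE('a)"
    and "\<not> is_field_ring TYPE('a)"
    and "primitive_add_char \<psi>"
    and "mult_char \<tau>"
  shows "(\<Sum>a\<in>(units::'a set). (cmod (kloosterman \<tau> \<psi> a))\<^sup>2) =
     (if primitive_mult_char \<tau>
      then 2 * real (card (UNIV::'a set)) * real (card (units::'a set)) - real (card (UNIV::'a set))^2
      else real (card (UNIV::'a set)) * real (card (units::'a set)))"
proof -
  interpret kloosterman_setting \<psi> \<tau>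
    using assms by unfold_locales
  have "card (units :: 'a set) \<le> card (UNIV :: 'a set)"
    by (rule card_mono) simp_all
  then have M: "real (card M) = real (card (UNIV :: 'a set)) - real (card (units :: 'a set))"
    by (simp add: card_M of_nat_diff)
  have socle: "real (card M) * real (card socle) = real (card (UNIV :: 'a set))"
    by (simp flip: of_nat_mult add: card_M_mult_card_socle)
  show ?thesis
    unfolding sum_cmod_kloosterman_sq socle by (simp add: M algebra_simps power2_eq_square)
qed

end
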